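(* Let $d>0$, $a\geq 7$ be integers with $\gcd(a,d)=1$ and let $\Gamma_4=\langle a,\,2a+d,\,3a+3d,\,4a+6d\rangle$. For each $1\leq i\leq a-1$ write $i=6\mu_i+q_i$ with $0\leq q_i<6$, and set $(\nu_i,\xi_i)=(1,q_i-3)$ if $q_i\geq 3$ and $(\nu_i,\xi_i)=(0,q_i)$ if $q_i<3$. Then $$\mathrm{Ap}(\Gamma_4,a)=\{0\}\cup\{(4\mu_i+3\nu_i+2\xi_i)a+id \mid 1\leq i\leq a-1\}.$$
   Context: For a numerical semigroup $\Gamma$ and nonzero $a\in\Gamma$, the Apéry set is $\mathrm{Ap}(\Gamma,a)=\{s\in\Gamma\mid s-a\notin\Gamma\}$. *)

theory Defs
  imports Main
begin

inductive_set gen_semigroup :: "nat set \<Rightarrow> nat set" for G :: "nat set" where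
  zero: "0 \<in> gen_semigroup G"
| add: "s \<in> gen_semigroup G \<Longrightarrow> g \<in> G \<Longrightarrow> s + g \<in> gen_semigroup G"

definition apery :: "nat set \<Rightarrow> nat \<Rightarrow> nat set" where
  "apery S a = {s \<in> S. \<not> (s \<ge> a \<and> s - a \<in> S)}"

end

theory Submission
  imports Defs
begin

text \<open>Write the generators as \<open>c a + j d\<close> with \<open>(c, j) \<in> {(1,0), (2,1), (3,3), (4,6)}\<close>.
  A nonnegative combination of them is \<open>c a + j d\<close> where \<open>c\<close> is at least the least number of
  \<open>a\<close>'s needed to reach \<open>j d\<close>, namely \<open>h j = 4\<mu> + 3\<nu> + 2\<xi>\<close> (\<open>apery_coeff\<close> below); conversely every such \<open>c a + j d\<close>
  is attained, padding with copies of \<open>a\<close>. An element of the Apery set therefore has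
  \<open>c = h j\<close>, and since \<open>h\<close> grows by at least one over any \<open>a \<ge> 7\<close> consecutive steps, also
  \<open>j < a\<close>. Conversely, for \<open>1 \<le> i < a\<close> a second representation
  \<open>h i a + i d = (n + 1) a + j d\<close> with \<open>h j \<le> n\<close> would force \<open>j \<equiv> i (mod a)\<close> by coprimality,
  hence \<open>j = i\<close> or \<open>j \<ge> i + a\<close>, and both contradict the growth of \<open>h\<close>.\<close>

definition apery_coeff :: "nat \<Rightarrow> nat" where
  "apery_coeff i = 4 * (i div 6) + 3 * (if i mod 6 \<ge> 3 then 1 else 0)
              + 2 * (if i mod 6 \<ge> 3 then i mod 6 - 3 else i mod 6)"

lemma apery_coeff_0 [simp]: "apery_coeff 0 = 0"
  unfolding apery_coeff_def by simp

lemma apery_coeff_eq: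
  assumes "j = 6 * m + r" "r < 6"
  shows "apery_coeff j = 4 * m + (if 3 \<le> r then 2 * r - 3 else 2 * r)"
  using assms unfolding apery_coeff_def by auto

lemma apery_coeff_cases:
  obtains m r where "j = 6 * m + r" "r < 6"
    "apery_coeff j = 4 * m + (if 3 \<le> r then 2 * r - 3 else 2 * r)"
proof -
  have "j = 6 * (j div 6) + j mod 6" "j mod 6 < 6" by simp_all
  with apery_coeff_eq[OF this] show ?thesis using that by blast
qed

lemma apery_coeff_add_6: "apery_coeff (j + 6) = apery_coeff j + 4"
proof -
  obtain m r where j: "j = 6 * m + r" "r < 6"
    and h: "apery_coeff j = 4 * m + (if 3 \<le> r then 2 * r - 3 else 2 * r)"
    by (rule apery_coeff_cases)
  have "j + 6 = 6 * (m + 1) + r" using j by simp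
  from apery_coeff_eq[OF this j(2)] h show ?thesis by simp
qed

lemma apery_coeff_Suc_le: "apery_coeff (Suc j) \<le> apery_coeff j + 2"
proof -
  obtain m r where j: "j = 6 * m + r" "r < 6"
    and h: "apery_coeff j = 4 * m + (if 3 \<le> r then 2 * r - 3 else 2 * r)"
    by (rule apery_coeff_cases)
  show ?thesis
  proof (cases "r = 5")
    case True
    then have "Suc j = 6 * (m + 1) + 0" using j by simp
    from apery_coeff_eq[OF this] h True show ?thesis by simp
  next
    case False
    then have "Suc j = 6 * m + (r + 1)" "r + 1 < 6" using j by auto
    from apery_coeff_eq[OF this] h show ?thesis by (simp split: if_splits)
  qed
qed

lemma apery_coeff_add_3_le: "apery_coeff (j + 3) \<le> apery_coeff j + 3"
proof -
  obtain m r where j: "j = 6 * m + r" "r < 6"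
    and h: "apery_coeff j = 4 * m + (if 3 \<le> r then 2 * r - 3 else 2 * r)"
    by (rule apery_coeff_cases)
  show ?thesis
  proof (cases "3 \<le> r")
    case True
    then have "j + 3 = 6 * (m + 1) + (r - 3)" "r - 3 < 6" using j by auto
    from apery_coeff_eq[OF this] h True show ?thesis by (simp split: if_splits)
  next
    case False
    then have "j + 3 = 6 * m + (r + 3)" "r + 3 < 6" using j by auto
    from apery_coeff_eq[OF this] h False show ?thesis by (simp split: if_splits)
  qed
qed

lemma apery_coeff_bounds: "2 * j \<le> 3 * apery_coeff j" "3 * apery_coeff j \<le> 2 * j + 11"
  by (rule apery_coeff_cases[of j], simp split: if_splits)+

lemma apery_coeff_less_add:
  assumes "7 \<le> k"
  shows "apery_coeff j < apery_coeff (j + k)"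
  using apery_coeff_bounds[of j] apery_coeff_bounds[of "j + k"] assms
  by (simp add: add_mult_distrib2)

lemma gen_semigroup_add_mult:
  assumes "s \<in> gen_semigroup G" "g \<in> G"
  shows "s + k * g \<in> gen_semigroup G"
proof (induction k)
  case 0
  then show ?case using assms(1) by simp
next
  case (Suc k)
  then show ?case using gen_semigroup.add[OF Suc assms(2)] by (simp add: add_ac)
qed

lemma gen_semigroup_imp_coeff:
  assumes "s \<in> gen_semigroup {a, 2*a + d, 3*a + 3*d, 4*a + 6*d}"
  shows "\<exists>c j. s = c * a + j * d \<and> apery_coeff j \<le> c"
  using assms
proof (induction rule: gen_semigroup.induct)
  case zero
  show ?case by (intro exI[of _ 0]) simp
next
  case (add s g)
  then obtain c j where s: "s = c * a + j * d" "apery_coeff j \<le> c" by blast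
  from add.hyps(2) show ?case
  proof (elim insertE)
    assume "g = a"
    then show ?thesis using s
      by (intro exI[of _ "c + 1"] exI[of _ j]) (simp add: algebra_simps)
  next
    assume "g = 2*a + d"
    then show ?thesis using s apery_coeff_Suc_le[of j]
      by (intro exI[of _ "c + 2"] exI[of _ "j + 1"]) (simp add: algebra_simps)
  next
    assume "g = 3*a + 3*d"
    then show ?thesis using s apery_coeff_add_3_le[of j]
      by (intro exI[of _ "c + 3"] exI[of _ "j + 3"]) (simp add: algebra_simps)
  next
    assume "g = 4*a + 6*d"
    then show ?thesis using s apery_coeff_add_6[of j]
      by (intro exI[of _ "c + 4"] exI[of _ "j + 6"]) (simp add: algebra_simps)
  qed simp
qed

lemma coeff_imp_gen_semigroup:
  assumes "apery_coeff j \<le> c"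
  shows "c * a + j * d \<in> gen_semigroup {a, 2*a + d, 3*a + 3*d, 4*a + 6*d}"
proof -
  let ?G = "{a, 2*a + d, 3*a + 3*d, 4*a + 6*d}"
  define m where "m = j div 6"
  define \<nu> where "\<nu> = (if j mod 6 \<ge> 3 then 1 else (0::nat))"
  define \<xi> where "\<xi> = (if j mod 6 \<ge> 3 then j mod 6 - 3 else j mod 6)"
  have h: "apery_coeff j = 4 * m + 3 * \<nu> + 2 * \<xi>"
    unfolding apery_coeff_def m_def \<nu>_def \<xi>_def by simp
  have j: "j = 6 * m + 3 * \<nu> + \<xi>"
    unfolding m_def \<nu>_def \<xi>_def by auto
  obtain e where c: "c = apery_coeff j + e" using assms le_Suc_ex by blast
  have "0 + e * a + \<xi> * (2*a + d) + \<nu> * (3*a + 3*d) + m * (4*a + 6*d) \<in> gen_semigroup ?G"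
    by (intro gen_semigroup_add_mult gen_semigroup.zero) auto
  also have "0 + e * a + \<xi> * (2*a + d) + \<nu> * (3*a + 3*d) + m * (4*a + 6*d)
      = (4 * m + 3 * \<nu> + 2 * \<xi> + e) * a + (6 * m + 3 * \<nu> + \<xi>) * d"
    by (simp add: algebra_simps)
  also have "\<dots> = c * a + j * d"
    unfolding c h by (simp flip: j)
  finally show ?thesis .
qed

lemma mem_gen_semigroup_iff:
  "s \<in> gen_semigroup {a, 2*a + d, 3*a + 3*d, 4*a + 6*d} \<longleftrightarrow>
    (\<exists>c j. s = c * a + j * d \<and> apery_coeff j \<le> c)"
  using gen_semigroup_imp_coeff coeff_imp_gen_semigroup by blast

lemma mod_eq_if_lincomb_eq:
  fixes a d :: nat
  assumes "coprime a d" "c * a + i * d = c' * a + j * d"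
  shows "j mod a = i mod a"
proof -
  have "(int j - int i) * int d = int a * (int c - int c')"
    using arg_cong[OF assms(2), of int] by (simp add: algebra_simps)
  then have "int a dvd (int j - int i) * int d" by simp
  with assms(1) have "int a dvd int j - int i"
    by (simp add: coprime_dvd_mult_left_iff)
  then show ?thesis
    by (metis mod_eq_dvd_iff of_nat_eq_iff of_nat_mod)
qed

lemma apery_subset:
  assumes "7 \<le> a"
  shows "apery (gen_semigroup {a, 2*a + d, 3*a + 3*d, 4*a + 6*d}) a \<subseteq>
    {0} \<union> {apery_coeff i * a + i * d | i. 1 \<le> i \<and> i \<le> a - 1}"
proof
  let ?S = "gen_semigroup {a, 2*a + d, 3*a + 3*d, 4*a + 6*d}"
  fix s
  assume "s \<in> apery ?S a"
  then have "s \<in> ?S" and not_sub: "\<not> (a \<le> s \<and> s - a \<in> ?S)"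
    unfolding apery_def by auto
  then obtain c j where s: "s = c * a + j * d" "apery_coeff j \<le> c"
    using mem_gen_semigroup_iff by blast
  have c: "c = apery_coeff j"
  proof (rule ccontr)
    assume "c \<noteq> apery_coeff j"
    then obtain c' where c': "c = Suc c'" "apery_coeff j \<le> c'"
      using s(2) by (cases c) auto
    with s have "s - a = c' * a + j * d" "a \<le> s" by auto
    with c'(2) not_sub show False using mem_gen_semigroup_iff by blast
  qed
  have "j < a"
  proof (rule ccontr)
    assume "\<not> j < a"
    then obtain k where j: "j = k + a" using le_Suc_ex not_less by (metis add.commute)
    have "apery_coeff k < c"
      using apery_coeff_less_add[OF assms] c j by blast
    then obtain c' where c': "c = Suc c'" "apery_coeff k \<le> c'"
      by (cases c) auto
    with s j have "s - a = (c' + d) * a + k * d" "a \<le> s"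
      by (auto simp: algebra_simps)
    moreover have "apery_coeff k \<le> c' + d" using c'(2) by simp
    ultimately show False using not_sub mem_gen_semigroup_iff by blast
  qed
  then show "s \<in> {0} \<union> {apery_coeff i * a + i * d | i. 1 \<le> i \<and> i \<le> a - 1}"
    using s c by (cases "j = 0") auto
qed

lemma apery_supset:
  assumes "7 \<le> a" "coprime a d"
  shows "{0} \<union> {apery_coeff i * a + i * d | i. 1 \<le> i \<and> i \<le> a - 1} \<subseteq>
    apery (gen_semigroup {a, 2*a + d, 3*a + 3*d, 4*a + 6*d}) a"
proof
  let ?S = "gen_semigroup {a, 2*a + d, 3*a + 3*d, 4*a + 6*d}"
  fix s
  assume "s \<in> {0} \<union> {apery_coeff i * a + i * d | i. 1 \<le> i \<and> i \<le> a - 1}"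
  then consider "s = 0" | i where "s = apery_coeff i * a + i * d" "1 \<le> i" "i < a"
    by fastforce
  then show "s \<in> apery ?S a"
  proof cases
    case 1
    then show ?thesis using assms(1) gen_semigroup.zero unfolding apery_def by auto
  next
    case 2
    have "\<not> (a \<le> s \<and> s - a \<in> ?S)"
    proof
      assume "a \<le> s \<and> s - a \<in> ?S"
      then obtain n j where "s - a = n * a + j * d" "apery_coeff j \<le> n" "a \<le> s"
        using mem_gen_semigroup_iff by blast
      then have eq: "apery_coeff i * a + i * d = (n + 1) * a + j * d" and hj: "apery_coeff j \<le> n"
        using 2 by auto
      have j_mod: "j mod a = i"
        using mod_eq_if_lincomb_eq[OF assms(2) eq] 2 by simp
      then have "i \<le> j" using mod_less_eq_dividend[of j a] by simp
      then have "i * d \<le> j * d" by simp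
      with eq have "(n + 1) * a \<le> apery_coeff i * a" by linarith
      then have "n + 1 \<le> apery_coeff i"
        using assms(1) mult_le_cancel2[of "n + 1" a "apery_coeff i"] by simp
      with hj have less: "apery_coeff j < apery_coeff i" by simp
      have j: "j div a * a + i = j" using j_mod div_mult_mod_eq[of j a] by simp
      have "j div a \<noteq> 0"
      proof
        assume "j div a = 0"
        with j have "j = i" by simp
        with less show False by simp
      qed
      then have "a \<le> j div a * a" by simp
      with j have "j = i + (j - i)" "7 \<le> j - i" using assms(1) by linarith+
      then show False using apery_coeff_less_add[of "j - i" i] less by simp
    qed
    moreover have "s \<in> ?S" using 2 coeff_imp_gen_semigroup by blast
    ultimately show ?thesis unfolding apery_def by simp
  qed
qed

theorem theorem2p2:
  fixes a d :: nat
  assumes "d > 0" and "a \<ge> 7" and "gcd a d = 1"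
  shows "apery (gen_semigroup {a, 2*a + d, 3*a + 3*d, 4*a + 6*d}) a =
    {0} \<union> {(4 * (i div 6) + 3 * (if i mod 6 \<ge> 3 then 1 else 0)
              + 2 * (if i mod 6 \<ge> 3 then i mod 6 - 3 else i mod 6)) * a + i * d
           | i. 1 \<le> i \<and> i \<le> a - 1}"
proof -
  have "coprime a d" using assms(3) by (simp add: coprime_iff_gcd_eq_1)
  with assms(2) have "apery (gen_semigroup {a, 2*a + d, 3*a + 3*d, 4*a + 6*d}) a =
      {0} \<union> {apery_coeff i * a + i * d | i. 1 \<le> i \<and> i \<le> a - 1}"
    using apery_subset apery_supset by (intro equalityI)
  then show ?thesis unfolding apery_coeff_def .
qed

end
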